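(* Let $\mathsf k_1,\mathsf k_2,\mathsf k_3$ be nonzero, and let $(\{\lambda_j\}_{j\le L},\{\mu_h\}_{h\le M})$ be a solution of the Bethe equations satisfying $\lambda_l\ne\lambda_m$, $\mu_p\ne\mu_q$, $\mu_q\ne\lambda_m$ for all $l\ne m$, $p\ne q$, and $\{\mu_h\}\cap\{\xi_n\}=\emptyset$. Let $t_1(\lambda)=t_1(\lambda|\{\lambda_j\},\{\mu_h\})$, set $x_a=t_1(\xi_a)$ and let $t_n(\lambda)=t_n(\lambda|\{x_a\})$, $n\ge2$, be the interpolation polynomials. Then $$t_2(\lambda)=\Lambda_1(\lambda)\big(\mathsf k_1t_1(\lambda+\eta)+\mathsf k_2\mathsf k_3d(\lambda)\big)/\mathsf k_1=\Lambda_1(\lambda)\big(\Lambda_1(\lambda+\eta)-\Lambda_2(\lambda+\eta)-\Lambda_3(\lambda+\eta)+\mathsf k_2\mathsf k_3d(\lambda)/\mathsf k_1\big),$$ and $t_{n+1}(\lambda)=\Lambda_1(\lambda)\,t_n(\lambda+\eta)$ for all $n\ge2$.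
   Context: Fix a nonzero complex number $\eta$, an integer $\mathsf N\ge1$ and complex inhomogeneities $\xi_1,\dots,\xi_{\mathsf N}$ with $\xi_a-\xi_b\notin\eta\mathbb Z$ for $a\ne b$. This concerns the fundamental $gl_{1|2}$ model with diagonal twist $K=\operatorname{diag}(\mathsf k_1,\mathsf k_2,\mathsf k_3)$. Write $d(\lambda)=\prod_{n=1}^{\mathsf N}(\lambda-\xi_n)$, $a(\lambda)=d(\lambda+\eta)$, and $f^{(m)}_a(\lambda)=\prod_{b\ne a}\frac{\lambda-\xi_b}{\xi_a-\xi_b}\prod_{b=1}^{\mathsf N}\prod_{r=1}^{m-1}\frac{1}{\xi_a-\xi_b+r\eta}$. Let $T_{\infty,1}=\mathsf k_1-\mathsf k_2-\mathsf k_3$ and $T_{\infty,n}=\mathsf k_1^{n-2}(\mathsf k_1-\mathsf k_2)(\mathsf k_1-\mathsf k_3)$ for $n\ge2$. Interpolation polynomials in unknowns $\{x_a\}$: $t_1(\lambda|\{x_a\})=T_{\infty,1}d(\lambda)+\sum_af^{(1)}_a(\lambda)x_a$ and, for $n\ge1$, $t_{n+1}(\lambda|\{x_a\})=\prod_{r=1}^nd(\lambda+r\eta)\big[T_{\infty,n+1}d(\lambda)+\sum_af^{(n+1)}_a(\lambda)t_n(\xi_a+\eta|\{x_a\})x_a\big]$. Bethe Ansatz: $Q_1(\lambda)=\prod_{l=1}^L(\lambda-\lambda_l)$, $Q_2(\lambda)=\prod_{m=1}^M(\lambda-\mu_m)$; Bethe equations: $\mathsf k_1Q_2(\lambda_j)a(\lambda_j)=\mathsf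 k_2d(\lambda_j)Q_2(\lambda_j+\eta)$ ($j\le L$) and $\mathsf k_2Q_2(\mu_j+\eta)Q_1(\mu_j-\eta)=-\mathsf k_3Q_2(\mu_j-\eta)Q_1(\mu_j)$ ($j\le M$). Define $\Lambda_1(\lambda)=\mathsf k_1a(\lambda)\frac{Q_1(\lambda-\eta)}{Q_1(\lambda)}$, $\Lambda_2(\lambda)=\mathsf k_2d(\lambda)\frac{Q_1(\lambda-\eta)Q_2(\lambda+\eta)}{Q_1(\lambda)Q_2(\lambda)}$, $\Lambda_3(\lambda)=\mathsf k_3d(\lambda)\frac{Q_2(\lambda-\eta)}{Q_2(\lambda)}$, and $t_1(\lambda|\{\lambda_j\},\{\mu_h\})=\Lambda_1(\lambda)-\Lambda_2(\lambda)-\Lambda_3(\lambda)$. *)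

theory Defs
  imports Complex_Main
begin

text \<open>Inhomogeneities are indexed by 1..N; Bethe roots by 1..L and 1..M.\<close>

definition dpol :: "nat \<Rightarrow> (nat \<Rightarrow> complex) \<Rightarrow> complex \<Rightarrow> complex" where
  "dpol N \<xi> z = (\<Prod>n\<in>{1..N}. (z - \<xi> n))"

definition apol :: "complex \<Rightarrow> nat \<Rightarrow> (nat \<Rightarrow> complex) \<Rightarrow> complex \<Rightarrow> complex" where
  "apol \<eta> N \<xi> z = dpol N \<xi> (z + \<eta>)"

definition fint :: "complex \<Rightarrow> nat \<Rightarrow> (nat \<Rightarrow> complex) \<Rightarrow> nat \<Rightarrow> nat \<Rightarrow> complex \<Rightarrow> complex" where
  "fint \<eta> N \<xi> m a z =
     (\<Prod>b\<in>{1..N} - {a}. (z - \<xi> b) / (\<xi> a - \<xi> b)) *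
     (\<Prod>b\<in>{1..N}. \<Prod>r\<in>{1..<m}. 1 / (\<xi> a - \<xi> b + of_nat r * \<eta>))"

text \<open>T_{\<infinity>,n}; only used for n \<ge> 1.\<close>
definition Tinf :: "complex \<Rightarrow> complex \<Rightarrow> complex \<Rightarrow> nat \<Rightarrow> complex" where
  "Tinf k1 k2 k3 n = (if n = 1 then k1 - k2 - k3 else k1 ^ (n - 2) * (k1 - k2) * (k1 - k3))"

text \<open>Interpolation polynomials t_n(z | {x_a}), n \<ge> 1 (the value at n = 0 is an unused dummy).\<close>
fun tint :: "complex \<Rightarrow> nat \<Rightarrow> (nat \<Rightarrow> complex) \<Rightarrow> complex \<Rightarrow> complex \<Rightarrow> complex
             \<Rightarrow> (nat \<Rightarrow> complex) \<Rightarrow> nat \<Rightarrow> complex \<Rightarrow> complex" where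
  "tint \<eta> N \<xi> k1 k2 k3 x 0 z = 0"
| "tint \<eta> N \<xi> k1 k2 k3 x (Suc 0) z =
     Tinf k1 k2 k3 1 * dpol N \<xi> z + (\<Sum>a\<in>{1..N}. fint \<eta> N \<xi> 1 a z * x a)"
| "tint \<eta> N \<xi> k1 k2 k3 x (Suc (Suc n)) z =
     (\<Prod>r\<in>{1..Suc n}. dpol N \<xi> (z + of_nat r * \<eta>)) *
     (Tinf k1 k2 k3 (Suc (Suc n)) * dpol N \<xi> z +
      (\<Sum>a\<in>{1..N}. fint \<eta> N \<xi> (Suc (Suc n)) a z * tint \<eta> N \<xi> k1 k2 k3 x (Suc n) (\<xi> a + \<eta>) * x a))"

definition Qpol :: "nat \<Rightarrow> (nat \<Rightarrow> complex) \<Rightarrow> complex \<Rightarrow> complex" where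
  "Qpol L r z = (\<Prod>l\<in>{1..L}. (z - r l))"

definition Lam1 :: "complex \<Rightarrow> nat \<Rightarrow> (nat \<Rightarrow> complex) \<Rightarrow> complex \<Rightarrow> nat \<Rightarrow> (nat \<Rightarrow> complex) \<Rightarrow> complex \<Rightarrow> complex" where
  "Lam1 \<eta> N \<xi> k1 L lam z = k1 * apol \<eta> N \<xi> z * Qpol L lam (z - \<eta>) / Qpol L lam z"

definition Lam2 :: "complex \<Rightarrow> nat \<Rightarrow> (nat \<Rightarrow> complex) \<Rightarrow> complex \<Rightarrow> nat \<Rightarrow> (nat \<Rightarrow> complex)
                    \<Rightarrow> nat \<Rightarrow> (nat \<Rightarrow> complex) \<Rightarrow> complex \<Rightarrow> complex" where
  "Lam2 \<eta> N \<xi> k2 L lam M mu z = k2 * dpol N \<xi> z *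
     (Qpol L lam (z - \<eta>) * Qpol M mu (z + \<eta>)) / (Qpol L lam z * Qpol M mu z)"

definition Lam3 :: "complex \<Rightarrow> nat \<Rightarrow> (nat \<Rightarrow> complex) \<Rightarrow> complex \<Rightarrow> nat \<Rightarrow> (nat \<Rightarrow> complex) \<Rightarrow> complex \<Rightarrow> complex" where
  "Lam3 \<eta> N \<xi> k3 M mu z = k3 * dpol N \<xi> z * Qpol M mu (z - \<eta>) / Qpol M mu z"

definition t1Bethe :: "complex \<Rightarrow> nat \<Rightarrow> (nat \<Rightarrow> complex) \<Rightarrow> complex \<Rightarrow> complex \<Rightarrow> complex
                       \<Rightarrow> nat \<Rightarrow> (nat \<Rightarrow> complex) \<Rightarrow> nat \<Rightarrow> (nat \<Rightarrow> complex) \<Rightarrow> complex \<Rightarrow> complex" where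
  "t1Bethe \<eta> N \<xi> k1 k2 k3 L lam M mu z =
     Lam1 \<eta> N \<xi> k1 L lam z - Lam2 \<eta> N \<xi> k2 L lam M mu z - Lam3 \<eta> N \<xi> k3 M mu z"

end

theory Submission
  imports Defs "HOL-Computational_Algebra.Polynomial"
begin

text \<open>The Bethe equations say that the numerator of \<open>t1 = \<Lambda>1 - \<Lambda>2 - \<Lambda>3\<close> vanishes at the zeros
  of \<open>Q1\<close> and \<open>Q2\<close>, so \<open>t1\<close> agrees with a polynomial \<open>P\<close> (\<open>t1_poly\<close>) of degree \<open>N\<close> with top coefficient
  \<open>k1 - k2 - k3 = T\<^sub>\<infinity>\<^sub>,\<^sub>1\<close>; as \<open>x\<^sub>a = P(\<xi>\<^sub>a)\<close>, interpolation gives \<open>t\<^sub>1(\<lambda>|{x\<^sub>a}) = P\<close>.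
  The first Bethe equation also makes \<open>k1 P(\<lambda> + \<eta>) + k2 k3 d(\<lambda>)\<close> divisible by \<open>Q1\<close>, with quotient
  \<open>C\<close> (\<open>fusion_quot\<close>). By induction on \<open>n \<ge> 2\<close>, \<open>t\<^sub>n(\<lambda>)\<close> is \<open>d(\<lambda> + \<eta>) \<cdots> d(\<lambda> + (n - 1)\<eta>)\<close> times
  \<open>k1\<^sup>n\<^sup>-\<^sup>2 Q1(\<lambda> - \<eta>) C(\<lambda> + (n - 2)\<eta>)\<close>: both cofactors have degree \<open>N\<close> and top coefficient
  \<open>T\<^sub>\<infinity>\<^sub>,\<^sub>n\<close>, and they agree at the nodes \<open>\<xi>\<^sub>a\<close>, where \<open>d(\<xi>\<^sub>a) = 0\<close> reduces \<open>x\<^sub>a\<close> to its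
  \<open>\<Lambda>1\<close> term. Dividing by \<open>Q1(\<lambda>)\<close> gives both formulas.\<close>

section \<open>Polynomials with prescribed top coefficient\<close>

text \<open>Unlike the leading coefficient, \<open>top_coeff p D c\<close> is stable under the arithmetic operations
  even when cancellations lower the degree (e.g.\ for \<open>k1 = k2\<close>).\<close>

definition top_coeff :: "'a::zero poly \<Rightarrow> nat \<Rightarrow> 'a \<Rightarrow> bool" where
  "top_coeff p D c \<longleftrightarrow> degree p \<le> D \<and> coeff p D = c"

lemma top_coeff_mult:
  fixes p q :: "'a::comm_semiring_0 poly"
  assumes "top_coeff p D c" "top_coeff q E e"
  shows "top_coeff (p * q) (D + E) (c * e)"
proof (cases "degree p = D \<and> degree q = E")
  case True
  then show ?thesis
    using assms degree_mult_le[of p q] by (auto simp: top_coeff_def coeff_mult_degree_sum)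
next
  case False
  then have "c * e = 0" and "degree (p * q) < D + E"
    using assms degree_mult_le[of p q] unfolding top_coeff_def
    by (auto simp: coeff_eq_0 le_less)
  then show ?thesis unfolding top_coeff_def by (simp add: coeff_eq_0)
qed

lemma top_coeff_add: "top_coeff p D c \<Longrightarrow> top_coeff q D e \<Longrightarrow> top_coeff (p + q) D (c + e)"
  unfolding top_coeff_def by (simp add: degree_add_le)

lemma top_coeff_diff:
  fixes p q :: "'a::ab_group_add poly"
  shows "top_coeff p D c \<Longrightarrow> top_coeff q D e \<Longrightarrow> top_coeff (p - q) D (c - e)"
  unfolding top_coeff_def by (simp add: degree_diff_le)

lemma top_coeff_smult: "top_coeff p D c \<Longrightarrow> top_coeff (smult a p) D (a * c)"
  using degree_smult_le[of a p] unfolding top_coeff_def by auto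

lemma top_coeff_sum:
  "(\<And>a. a \<in> A \<Longrightarrow> top_coeff (f a) D (c a)) \<Longrightarrow> top_coeff (\<Sum>a\<in>A. f a) D (\<Sum>a\<in>A. c a)"
proof (induction A rule: infinite_finite_induct)
  case (insert a A)
  then show ?case by (simp add: top_coeff_add)
qed (simp_all add: top_coeff_def)

lemma top_coeff_of_degree_less: "degree p < D \<Longrightarrow> top_coeff p D 0"
  unfolding top_coeff_def by (simp add: coeff_eq_0)

lemma top_coeff_prod_linear:
  fixes g :: "'b \<Rightarrow> 'a::comm_semiring_1"
  shows "finite S \<Longrightarrow> top_coeff (\<Prod>i\<in>S. [:g i, 1:]) (card S) 1"
proof (induction S rule: finite_induct)
  case empty
  then show ?case by (simp add: top_coeff_def)
next
  case (insert i S)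
  have "top_coeff [:g i, 1:] 1 1" by (simp add: top_coeff_def)
  from top_coeff_mult[OF this insert.IH] insert.hyps show ?case by simp
qed

lemma top_coeff_pcompose_linear:
  fixes p :: "'a::idom poly"
  assumes "top_coeff p D c"
  shows "top_coeff (pcompose p [:s, 1:]) D c"
proof (cases "degree p = D")
  case True
  have "lead_coeff (pcompose p [:s, 1:]) = lead_coeff p"
    by (subst lead_coeff_comp) auto
  with assms True show ?thesis by (simp add: top_coeff_def degree_pcompose)
next
  case False
  with assms show ?thesis by (auto simp: top_coeff_def degree_pcompose coeff_eq_0)
qed

lemma top_coeff_monic_mult_iff:
  fixes Q X :: "'a::idom poly"
  assumes Q: "top_coeff Q D 1"
  shows "top_coeff (Q * X) (D + K) c \<longleftrightarrow> top_coeff X K c"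
proof
  assume QX: "top_coeff (Q * X) (D + K) c"
  show "top_coeff X K c"
  proof (cases "X = 0")
    case True
    with QX show ?thesis by (simp add: top_coeff_def)
  next
    case False
    have "Q \<noteq> 0" "degree Q = D"
      using Q by (auto simp: top_coeff_def le_antisym le_degree)
    then have deg: "degree (Q * X) = D + degree X"
      using False by (simp add: degree_mult_eq)
    show ?thesis
    proof (cases "degree X = K")
      case True
      then have "coeff (Q * X) (D + K) = coeff X K"
        using Q \<open>degree Q = D\<close> coeff_mult_degree_sum[of Q X] by (simp add: top_coeff_def)
      with QX True show ?thesis by (simp add: top_coeff_def)
    next
      case False
      with QX deg have "degree (Q * X) < D + K" by (simp add: top_coeff_def)
      with QX deg show ?thesis by (simp add: top_coeff_def coeff_eq_0)
    qed
  qed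
next
  assume "top_coeff X K c"
  from top_coeff_mult[OF Q this] show "top_coeff (Q * X) (D + K) c" by simp
qed

lemma top_coeff_swap_monic_factor:
  fixes Q Q' X :: "'a::idom poly"
  assumes "top_coeff (Q * X) K c" and Q: "top_coeff Q D 1" and Q': "top_coeff Q' D 1"
  shows "top_coeff (Q' * X) K c"
proof (cases "D \<le> K")
  case True
  then obtain K' where "K = D + K'" by (metis le_add_diff_inverse)
  with assms show ?thesis by (simp add: top_coeff_monic_mult_iff)
next
  case False
  have "Q \<noteq> 0" "degree Q = D"
    using Q by (auto simp: top_coeff_def le_antisym le_degree)
  have "X = 0"
  proof (rule ccontr)
    assume "X \<noteq> 0"
    then have "degree (Q * X) \<ge> D"
      using \<open>Q \<noteq> 0\<close> \<open>degree Q = D\<close> by (simp add: degree_mult_eq)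
    with assms(1) False show False by (simp add: top_coeff_def)
  qed
  with assms(1) show ?thesis by simp
qed

section \<open>Root and shift polynomials\<close>

lemma prod_linear_dvd_of_roots:
  fixes p :: "'a::idom poly"
  shows "finite S \<Longrightarrow> (\<And>s. s \<in> S \<Longrightarrow> poly p s = 0) \<Longrightarrow> (\<Prod>s\<in>S. [:-s, 1:]) dvd p"
proof (induction S arbitrary: p rule: finite_induct)
  case empty
  then show ?case by simp
next
  case (insert s S)
  obtain q where q: "p = [:-s, 1:] * q"
    using insert.prems poly_eq_0_iff_dvd by (metis dvdE insertI1)
  have "poly q t = 0" if "t \<in> S" for t
    using insert.prems[of t] insert.hyps that by (auto simp: q)
  then have "(\<Prod>s\<in>S. [:-s, 1:]) dvd q" by (rule insert.IH)
  then have "[:-s, 1:] * (\<Prod>s\<in>S. [:-s, 1:]) dvd p"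
    unfolding q by (rule mult_dvd_mono[OF dvd_refl])
  with insert.hyps show ?case by (metis prod.insert)
qed

definition root_poly :: "nat \<Rightarrow> (nat \<Rightarrow> 'a::comm_ring_1) \<Rightarrow> 'a poly" where
  "root_poly n r = (\<Prod>i\<in>{1..n}. [:- r i, 1:])"

definition shift_poly :: "'a::comm_semiring_1 poly \<Rightarrow> 'a \<Rightarrow> 'a poly" where
  "shift_poly p c = pcompose p [:c, 1:]"

lemma poly_root_poly: "poly (root_poly n r) z = Qpol n r z"
  by (simp add: root_poly_def Qpol_def poly_prod)

lemma top_coeff_root_poly: "top_coeff (root_poly n r) n 1"
  unfolding root_poly_def using top_coeff_prod_linear[of "{1..n}" "\<lambda>i. - r i"] by simp

lemma root_poly_dvd:
  fixes p :: "'a::idom poly"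
  assumes inj: "inj_on r {1..n}" and roots: "\<And>i. i \<in> {1..n} \<Longrightarrow> poly p (r i) = 0"
  shows "root_poly n r dvd p"
proof -
  have "root_poly n r = (\<Prod>s\<in>r ` {1..n}. [:-s, 1:])"
    using prod.reindex[OF inj, of "\<lambda>s. [:-s, 1:]"] by (simp add: root_poly_def)
  also have "\<dots> dvd p"
    by (rule prod_linear_dvd_of_roots) (use roots in auto)
  finally show ?thesis .
qed

lemma poly_shift_poly [simp]: "poly (shift_poly p c) w = poly p (w + c)"
  by (simp add: shift_poly_def poly_pcompose add.commute)

lemma shift_poly_mult: "shift_poly (p * q) c = shift_poly p c * shift_poly q c"
  by (simp add: shift_poly_def pcompose_mult)

lemma top_coeff_shift_poly:
  fixes p :: "'a::idom poly"
  shows "top_coeff p D c \<Longrightarrow> top_coeff (shift_poly p s) D c"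
  unfolding shift_poly_def by (rule top_coeff_pcompose_linear)

lemma dpol_eq_Qpol: "dpol = Qpol"
  by (simp add: fun_eq_iff dpol_def Qpol_def)

lemma Qpol_eq_0_iff: "Qpol n r z = 0 \<longleftrightarrow> (\<exists>i\<in>{1..n}. r i = z)"
  by (auto simp: Qpol_def)

section \<open>Lagrange interpolation\<close>

lemma lagrange_interpolation:
  fixes p :: "'a::field poly" and \<xi> :: "nat \<Rightarrow> 'a"
  assumes inj: "inj_on \<xi> {1..N}" and deg: "degree p \<le> N"
  shows "poly p z = coeff p N * (\<Prod>n\<in>{1..N}. z - \<xi> n)
           + (\<Sum>a\<in>{1..N}. (\<Prod>b\<in>{1..N} - {a}. (z - \<xi> b) / (\<xi> a - \<xi> b)) * poly p (\<xi> a))"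
proof -
  define basis where
    "basis a = smult (1 / (\<Prod>b\<in>{1..N} - {a}. \<xi> a - \<xi> b)) (\<Prod>b\<in>{1..N} - {a}. [:- \<xi> b, 1:])" for a
  define q where
    "q = smult (coeff p N) (\<Prod>n\<in>{1..N}. [:- \<xi> n, 1:]) + (\<Sum>a\<in>{1..N}. smult (poly p (\<xi> a)) (basis a))"
  have poly_basis: "poly (basis a) w = (\<Prod>b\<in>{1..N} - {a}. (w - \<xi> b) / (\<xi> a - \<xi> b))" for a w
    unfolding basis_def by (simp add: poly_prod prod_dividef)
  have basis_at_node: "poly (basis a) (\<xi> b) = (if a = b then 1 else 0)"
    if "a \<in> {1..N}" "b \<in> {1..N}" for a b
    using that inj_on_eq_iff[OF inj] by (auto simp: poly_basis prod_zero_iff intro!: prod.neutral)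
  have "top_coeff (basis a) N 0" if "a \<in> {1..N}" for a
  proof -
    have "degree (\<Prod>b\<in>{1..N} - {a}. [:- \<xi> b, 1:]) \<le> card ({1..N} - {a})"
      using top_coeff_prod_linear[of "{1..N} - {a}" "\<lambda>b. - \<xi> b"] by (simp add: top_coeff_def)
    also have "\<dots> < N" using that by simp
    finally show ?thesis
      unfolding basis_def by (intro top_coeff_of_degree_less) (meson degree_smult_le le_less_trans)
  qed
  then have "top_coeff q N (coeff p N * 1 + (\<Sum>a\<in>{1..N}. poly p (\<xi> a) * 0))"
    unfolding q_def
    using top_coeff_prod_linear[of "{1..N}" "\<lambda>n. - \<xi> n"]
    by (intro top_coeff_add top_coeff_smult top_coeff_sum) auto
  then have q: "degree q \<le> N" "coeff q N = coeff p N" by (simp_all add: top_coeff_def)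
  have "poly p (\<xi> b) = poly q (\<xi> b)" if "b \<in> {1..N}" for b
  proof -
    have "poly (\<Prod>n\<in>{1..N}. [:- \<xi> n, 1:]) (\<xi> b) = 0"
      using that by (auto simp: poly_prod prod_zero_iff)
    moreover have "(\<Sum>a\<in>{1..N}. poly p (\<xi> a) * poly (basis a) (\<xi> b))
        = (\<Sum>a\<in>{1..N}. if a = b then poly p (\<xi> b) else 0)"
      using that by (intro sum.cong) (auto simp: basis_at_node)
    ultimately show ?thesis using that by (simp add: q_def poly_sum)
  qed
  then have "p = q"
    using inj deg q by (intro poly_eqI_degree_lead_coeff[where A = "\<xi> ` {1..N}"]) (auto simp: card_image)
  then have "poly p z = poly q z" by simp
  then show ?thesis by (simp add: q_def poly_sum poly_prod poly_basis mult.commute)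
qed

lemma prod_split_first_point:
  assumes "n \<ge> 1"
  shows "(\<Prod>r\<in>{1..n}. f (w + of_nat r * \<eta>)) = f (w + \<eta>) * (\<Prod>r\<in>{1..n - 1}. f (w + \<eta> + of_nat r * \<eta>))"
proof -
  obtain m where n: "n = Suc m" using assms by (cases n) auto
  have "(\<Prod>r\<in>{1..Suc m}. f (w + of_nat r * \<eta>)) = f (w + \<eta>) * (\<Prod>r\<in>{Suc 1..Suc m}. f (w + of_nat r * \<eta>))"
    by (subst prod.atLeast_Suc_atMost) simp_all
  also have "(\<Prod>r\<in>{Suc 1..Suc m}. f (w + of_nat r * \<eta>)) = (\<Prod>r\<in>{1..m}. f (w + \<eta> + of_nat r * \<eta>))"
    by (subst prod.shift_bounds_cl_Suc_ivl) (simp add: algebra_simps)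
  finally show ?thesis by (simp add: n)
qed

lemma fint_eq:
  "fint \<eta> N \<xi> m a z = (\<Prod>b\<in>{1..N} - {a}. (z - \<xi> b) / (\<xi> a - \<xi> b))
     / (\<Prod>r\<in>{1..<m}. dpol N \<xi> (\<xi> a + of_nat r * \<eta>))"
proof -
  have "(\<Prod>b\<in>{1..N}. \<Prod>r\<in>{1..<m}. 1 / (\<xi> a - \<xi> b + of_nat r * \<eta>))
      = (\<Prod>r\<in>{1..<m}. \<Prod>b\<in>{1..N}. 1 / (\<xi> a + of_nat r * \<eta> - \<xi> b))"
    by (subst prod.swap) (simp add: algebra_simps)
  also have "\<dots> = 1 / (\<Prod>r\<in>{1..<m}. dpol N \<xi> (\<xi> a + of_nat r * \<eta>))"
    by (simp add: dpol_def prod_dividef)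
  finally show ?thesis by (simp add: fint_def)
qed

lemma interpolation_by_fint:
  fixes \<xi> :: "nat \<Rightarrow> complex"
  assumes inj: "inj_on \<xi> {1..N}" and B: "top_coeff B N T"
    and nonzero: "\<And>a. a \<in> {1..N} \<Longrightarrow> (\<Prod>r\<in>{1..<m}. dpol N \<xi> (\<xi> a + of_nat r * \<eta>)) \<noteq> 0"
    and at_nodes: "\<And>a. a \<in> {1..N} \<Longrightarrow> v a = (\<Prod>r\<in>{1..<m}. dpol N \<xi> (\<xi> a + of_nat r * \<eta>)) * poly B (\<xi> a)"
  shows "T * dpol N \<xi> z + (\<Sum>a\<in>{1..N}. fint \<eta> N \<xi> m a z * v a) = poly B z"
proof -
  have "(\<Sum>a\<in>{1..N}. fint \<eta> N \<xi> m a z * v a)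
      = (\<Sum>a\<in>{1..N}. (\<Prod>b\<in>{1..N} - {a}. (z - \<xi> b) / (\<xi> a - \<xi> b)) * poly B (\<xi> a))"
    using nonzero by (intro sum.cong) (simp_all add: fint_eq at_nodes)
  with B show ?thesis
    using lagrange_interpolation[OF inj, of B z] by (simp add: top_coeff_def dpol_def)
qed

lemma tint_1_eq_poly:
  fixes \<xi> :: "nat \<Rightarrow> complex"
  assumes "inj_on \<xi> {1..N}" and "top_coeff B N (Tinf k1 k2 k3 1)"
    and "\<And>a. a \<in> {1..N} \<Longrightarrow> x a = poly B (\<xi> a)"
  shows "tint \<eta> N \<xi> k1 k2 k3 x 1 z = poly B z"
  using interpolation_by_fint[OF assms(1,2), where m = 1 and \<eta> = \<eta> and v = x] assms(3) by simp

lemma tint_Suc_eq_poly: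
  fixes \<xi> :: "nat \<Rightarrow> complex"
  assumes inj: "inj_on \<xi> {1..N}" and n: "n \<ge> 1" and B: "top_coeff B N (Tinf k1 k2 k3 (Suc n))"
    and nonzero: "\<And>a. a \<in> {1..N} \<Longrightarrow> (\<Prod>r\<in>{1..n}. dpol N \<xi> (\<xi> a + of_nat r * \<eta>)) \<noteq> 0"
    and at_nodes: "\<And>a. a \<in> {1..N} \<Longrightarrow> tint \<eta> N \<xi> k1 k2 k3 x n (\<xi> a + \<eta>) * x a
                   = (\<Prod>r\<in>{1..n}. dpol N \<xi> (\<xi> a + of_nat r * \<eta>)) * poly B (\<xi> a)"
  shows "tint \<eta> N \<xi> k1 k2 k3 x (Suc n) z = (\<Prod>r\<in>{1..n}. dpol N \<xi> (z + of_nat r * \<eta>)) * poly B z"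
proof -
  obtain m where m: "n = Suc m" using n by (cases n) auto
  have "tint \<eta> N \<xi> k1 k2 k3 x (Suc n) z = (\<Prod>r\<in>{1..n}. dpol N \<xi> (z + of_nat r * \<eta>)) *
     (Tinf k1 k2 k3 (Suc n) * dpol N \<xi> z +
      (\<Sum>a\<in>{1..N}. fint \<eta> N \<xi> (Suc n) a z * (tint \<eta> N \<xi> k1 k2 k3 x n (\<xi> a + \<eta>) * x a)))"
    by (simp add: m mult.assoc)
  also have "Tinf k1 k2 k3 (Suc n) * dpol N \<xi> z +
      (\<Sum>a\<in>{1..N}. fint \<eta> N \<xi> (Suc n) a z * (tint \<eta> N \<xi> k1 k2 k3 x n (\<xi> a + \<eta>) * x a)) = poly B z"
    using nonzero at_nodes by (intro interpolation_by_fint[OF inj B]) (simp_all add: atLeastLessThanSuc_atLeastAtMost)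
  finally show ?thesis .
qed

declare tint.simps [simp del]

section \<open>Bethe solutions\<close>

locale bethe_solution =
  fixes \<eta> k1 k2 k3 :: complex and N L M :: nat and \<xi> lam mu x :: "nat \<Rightarrow> complex"
  assumes eta: "\<eta> \<noteq> 0"
    and xi: "\<And>a b (z::int). a \<in> {1..N} \<Longrightarrow> b \<in> {1..N} \<Longrightarrow> a \<noteq> b \<Longrightarrow> \<xi> a - \<xi> b \<noteq> of_int z * \<eta>"
    and k1: "k1 \<noteq> 0"
    and bethe1: "\<And>j. j \<in> {1..L} \<Longrightarrow>
       k1 * Qpol M mu (lam j) * apol \<eta> N \<xi> (lam j) = k2 * dpol N \<xi> (lam j) * Qpol M mu (lam j + \<eta>)"
    and bethe2: "\<And>j. j \<in> {1..M} \<Longrightarrow>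
       k2 * Qpol M mu (mu j + \<eta>) * Qpol L lam (mu j - \<eta>) = - k3 * Qpol M mu (mu j - \<eta>) * Qpol L lam (mu j)"
    and dlam: "inj_on lam {1..L}"
    and dmu: "inj_on mu {1..M}"
    and dmulam: "\<And>q m. q \<in> {1..M} \<Longrightarrow> m \<in> {1..L} \<Longrightarrow> mu q \<noteq> lam m"
    and muxi: "\<And>h n. h \<in> {1..M} \<Longrightarrow> n \<in> {1..N} \<Longrightarrow> mu h \<noteq> \<xi> n"
    and x: "\<And>a. x a = t1Bethe \<eta> N \<xi> k1 k2 k3 L lam M mu (\<xi> a)"
begin

abbreviation "d \<equiv> dpol N \<xi>"
abbreviation "Q1 \<equiv> Qpol L lam"
abbreviation "Q2 \<equiv> Qpol M mu"
abbreviation "t1 \<equiv> t1Bethe \<eta> N \<xi> k1 k2 k3 L lam M mu"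
abbreviation "t \<equiv> tint \<eta> N \<xi> k1 k2 k3 x"
abbreviation "dP \<equiv> root_poly N \<xi>"
abbreviation "Q1P \<equiv> root_poly L lam"
abbreviation "Q2P \<equiv> root_poly M mu"

lemma poly_root_polys [simp]: "poly dP w = d w" "poly Q1P w = Q1 w" "poly Q2P w = Q2 w"
  by (simp_all add: poly_root_poly dpol_eq_Qpol)

lemma inj_xi: "inj_on \<xi> {1..N}"
  by (rule inj_onI) (use xi[where z = 0] in fastforce)

lemma d_at_xi: "a \<in> {1..N} \<Longrightarrow> d (\<xi> a) = 0"
  by (auto simp: dpol_eq_Qpol Qpol_eq_0_iff)

lemma d_shift_xi_nonzero:
  assumes a: "a \<in> {1..N}" and r: "r \<ge> 1"
  shows "d (\<xi> a + of_nat r * \<eta>) \<noteq> 0"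
proof
  assume "d (\<xi> a + of_nat r * \<eta>) = 0"
  then obtain b where b: "b \<in> {1..N}" "\<xi> b = \<xi> a + of_nat r * \<eta>"
    by (auto simp: dpol_eq_Qpol Qpol_eq_0_iff)
  show False
  proof (cases "b = a")
    case True
    with b eta r show False by simp
  next
    case False
    with xi[of b a "int r"] b a show False by simp
  qed
qed

lemma prod_d_shift_xi_nonzero: "a \<in> {1..N} \<Longrightarrow> (\<Prod>r\<in>{1..n}. d (\<xi> a + of_nat r * \<eta>)) \<noteq> 0"
  by (simp add: d_shift_xi_nonzero)

lemma Q2_xi_nonzero: "a \<in> {1..N} \<Longrightarrow> Q2 (\<xi> a) \<noteq> 0"
  using muxi by (force simp: Qpol_eq_0_iff)

lemma Q1_mu_nonzero: "m \<in> {1..M} \<Longrightarrow> Q1 (mu m) \<noteq> 0"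
  using dmulam by (force simp: Qpol_eq_0_iff)

lemma Q1_xi_nonzero:
  assumes a: "a \<in> {1..N}"
  shows "Q1 (\<xi> a) \<noteq> 0"
proof
  assume "Q1 (\<xi> a) = 0"
  then obtain j where j: "j \<in> {1..L}" "lam j = \<xi> a" by (auto simp: Qpol_eq_0_iff)
  have "k1 * Q2 (\<xi> a) * d (\<xi> a + \<eta>) = 0"
    using bethe1[OF j(1)] j(2) d_at_xi[OF a] by (simp add: apol_def)
  then show False
    using k1 Q2_xi_nonzero[OF a] d_shift_xi_nonzero[OF a, of 1] by simp
qed

lemma Q2_lam_shift_nonzero:
  assumes j: "j \<in> {1..L}"
  shows "Q2 (lam j + \<eta>) \<noteq> 0"
proof
  assume "Q2 (lam j + \<eta>) = 0"
  then obtain m where m: "m \<in> {1..M}" "mu m = lam j + \<eta>" by (auto simp: Qpol_eq_0_iff)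
  have "Q2 (lam j) \<noteq> 0" using dmulam j by (force simp: Qpol_eq_0_iff)
  with bethe1[OF j] \<open>Q2 (lam j + \<eta>) = 0\<close> k1 have "d (lam j + \<eta>) = 0"
    by (simp add: apol_def)
  then obtain n where "n \<in> {1..N}" "\<xi> n = lam j + \<eta>" by (auto simp: dpol_eq_Qpol Qpol_eq_0_iff)
  with muxi[OF m(1)] m(2) show False by force
qed

definition bethe1_poly :: "complex poly" where
  "bethe1_poly = smult k1 (shift_poly dP \<eta> * Q2P) - smult k2 (dP * shift_poly Q2P \<eta>)"

definition bethe1_quot :: "complex poly" where
  "bethe1_quot = bethe1_poly div Q1P"

lemma Q1P_mult_bethe1_quot: "Q1P * bethe1_quot = bethe1_poly"
proof -
  have "Q1P dvd bethe1_poly"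
  proof (rule root_poly_dvd[OF dlam])
    fix j assume "j \<in> {1..L}"
    from bethe1[OF this] show "poly bethe1_poly (lam j) = 0"
      by (simp add: bethe1_poly_def apol_def mult_ac)
  qed
  then show ?thesis by (simp add: bethe1_quot_def)
qed

lemma Q1_mult_bethe1_quot:
  "Q1 w * poly bethe1_quot w = k1 * d (w + \<eta>) * Q2 w - k2 * d w * Q2 (w + \<eta>)"
  using arg_cong[OF Q1P_mult_bethe1_quot, of "\<lambda>p. poly p w"] by (simp add: bethe1_poly_def)

definition bethe2_poly :: "complex poly" where
  "bethe2_poly = shift_poly Q1P (- \<eta>) * bethe1_quot - smult k3 (dP * shift_poly Q2P (- \<eta>))"

text \<open>The polynomial that \<open>t1\<close> becomes once the Bethe equations cancel its poles.\<close>

definition t1_poly :: "complex poly" where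
  "t1_poly = bethe2_poly div Q2P"

lemma Q2P_mult_t1_poly: "Q2P * t1_poly = bethe2_poly"
proof -
  have "Q2P dvd bethe2_poly"
  proof (rule root_poly_dvd[OF dmu])
    fix m assume m: "m \<in> {1..M}"
    have "Q1 (mu m) * poly bethe2_poly (mu m)
        = Q1 (mu m - \<eta>) * (Q1 (mu m) * poly bethe1_quot (mu m))
          - k3 * d (mu m) * Q2 (mu m - \<eta>) * Q1 (mu m)"
      by (simp add: bethe2_poly_def algebra_simps)
    also have "\<dots> = - d (mu m) * (k2 * Q2 (mu m + \<eta>) * Q1 (mu m - \<eta>) + k3 * Q2 (mu m - \<eta>) * Q1 (mu m))"
    proof -
      have "Q2 (mu m) = 0" using m by (auto simp: Qpol_eq_0_iff)
      then show ?thesis by (simp add: Q1_mult_bethe1_quot algebra_simps)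
    qed
    also have "\<dots> = 0" using bethe2[OF m] by simp
    finally show "poly bethe2_poly (mu m) = 0" using Q1_mu_nonzero[OF m] by simp
  qed
  then show ?thesis by (simp add: t1_poly_def)
qed

lemma Q2_mult_t1_poly:
  "Q2 w * poly t1_poly w = Q1 (w - \<eta>) * poly bethe1_quot w - k3 * d w * Q2 (w - \<eta>)"
  using arg_cong[OF Q2P_mult_t1_poly, of "\<lambda>p. poly p w"] by (simp add: bethe2_poly_def)

lemma top_coeff_t1_poly: "top_coeff t1_poly N (k1 - k2 - k3)"
proof -
  have Q1P: "top_coeff Q1P L 1" and Q2P: "top_coeff Q2P M 1" and dP: "top_coeff dP N 1"
    by (rule top_coeff_root_poly)+
  have "Q1P * Q2P * t1_poly = shift_poly Q1P (- \<eta>) * bethe1_poly - smult k3 (Q1P * (dP * shift_poly Q2P (- \<eta>)))"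
    by (simp add: Q2P_mult_t1_poly bethe2_poly_def Q1P_mult_bethe1_quot[symmetric] algebra_simps)
  moreover have "top_coeff \<dots> (L + (N + M)) (1 * (k1 * (1 * 1) - k2 * (1 * 1)) - k3 * (1 * (1 * 1)))"
    unfolding bethe1_poly_def
    by (intro top_coeff_diff top_coeff_smult top_coeff_mult top_coeff_shift_poly Q1P Q2P dP)
  ultimately have "top_coeff (Q1P * Q2P * t1_poly) ((L + M) + N) (k1 - k2 - k3)"
    by (simp add: ac_simps)
  then show ?thesis
    using top_coeff_monic_mult_iff[OF top_coeff_mult[OF Q1P Q2P, simplified]] by simp
qed

lemma poly_t1_poly:
  assumes "Q1 w \<noteq> 0" "Q2 w \<noteq> 0"
  shows "poly t1_poly w = t1 w"
proof -
  have "Q1 w * Q2 w * poly t1_poly w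
      = Q1 (w - \<eta>) * (Q1 w * poly bethe1_quot w) - k3 * d w * Q2 (w - \<eta>) * Q1 w"
    unfolding mult.assoc Q2_mult_t1_poly by (simp add: algebra_simps)
  also have "\<dots> = Q1 (w - \<eta>) * (k1 * d (w + \<eta>) * Q2 w - k2 * d w * Q2 (w + \<eta>)) - k3 * d w * Q2 (w - \<eta>) * Q1 w"
    by (simp only: Q1_mult_bethe1_quot)
  finally have "poly t1_poly w = \<dots> / (Q1 w * Q2 w)"
    using assms by (simp add: eq_divide_eq ac_simps)
  also have "\<dots> = t1 w"
    using assms by (simp add: t1Bethe_def Lam1_def Lam2_def Lam3_def apol_def field_simps)
  finally show ?thesis .
qed

lemma x_eq_poly_t1_poly: "a \<in> {1..N} \<Longrightarrow> x a = poly t1_poly (\<xi> a)"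
  using x poly_t1_poly Q1_xi_nonzero Q2_xi_nonzero by simp

lemma Q1_mult_x: "a \<in> {1..N} \<Longrightarrow> Q1 (\<xi> a) * x a = k1 * d (\<xi> a + \<eta>) * Q1 (\<xi> a - \<eta>)"
  using Q1_xi_nonzero
  by (simp add: x t1Bethe_def Lam1_def Lam2_def Lam3_def apol_def d_at_xi)

lemma tint_1: "t 1 w = poly t1_poly w"
  using inj_xi top_coeff_t1_poly x_eq_poly_t1_poly by (intro tint_1_eq_poly) (simp_all add: Tinf_def)

definition fusion_poly :: "complex poly" where
  "fusion_poly = smult k1 (shift_poly t1_poly \<eta>) + smult (k2 * k3) dP"

definition fusion_quot :: "complex poly" where
  "fusion_quot = fusion_poly div Q1P"

lemma Q1P_mult_fusion_quot: "Q1P * fusion_quot = fusion_poly"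
proof -
  have "Q1P dvd fusion_poly"
  proof (rule root_poly_dvd[OF dlam])
    fix j assume j: "j \<in> {1..L}"
    have "Q1 (lam j) = 0" using j by (auto simp: Qpol_eq_0_iff)
    have "Q2 (lam j + \<eta>) * poly fusion_poly (lam j)
        = k1 * (Q2 (lam j + \<eta>) * poly t1_poly (lam j + \<eta>)) + k2 * k3 * d (lam j) * Q2 (lam j + \<eta>)"
      by (simp add: fusion_poly_def algebra_simps)
    also have "\<dots> = - k3 * (k1 * Q2 (lam j) * apol \<eta> N \<xi> (lam j) - k2 * d (lam j) * Q2 (lam j + \<eta>))"
      using \<open>Q1 (lam j) = 0\<close> by (simp add: Q2_mult_t1_poly apol_def algebra_simps)
    also have "\<dots> = 0" using bethe1[OF j] by simp
    finally show "poly fusion_poly (lam j) = 0" using Q2_lam_shift_nonzero[OF j] by simp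
  qed
  then show ?thesis by (simp add: fusion_quot_def)
qed

lemma Q1_mult_fusion_quot: "Q1 w * poly fusion_quot w = k1 * poly t1_poly (w + \<eta>) + k2 * k3 * d w"
  using arg_cong[OF Q1P_mult_fusion_quot, of "\<lambda>p. poly p w"] by (simp add: fusion_poly_def)

text \<open>\<open>t (n + 2)\<close> is this polynomial times \<open>d (w + \<eta>) \<dots> d (w + (n + 1) \<eta>)\<close>.\<close>

definition tint_core :: "nat \<Rightarrow> complex poly" where
  "tint_core n = smult (k1 ^ (n - 2)) (shift_poly Q1P (- \<eta>) * shift_poly fusion_quot (of_nat (n - 2) * \<eta>))"

lemma poly_tint_core:
  "poly (tint_core n) w = k1 ^ (n - 2) * Q1 (w - \<eta>) * poly fusion_quot (w + of_nat (n - 2) * \<eta>)"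
  by (simp add: tint_core_def)

lemma top_coeff_tint_core:
  assumes "n \<ge> 2"
  shows "top_coeff (tint_core n) N (Tinf k1 k2 k3 n)"
proof -
  define s where "s = of_nat (n - 2) * \<eta>"
  have "top_coeff fusion_poly N (k1 * (k1 - k2 - k3) + k2 * k3 * 1)"
    unfolding fusion_poly_def
    by (intro top_coeff_add top_coeff_smult top_coeff_shift_poly top_coeff_t1_poly top_coeff_root_poly)
  then have "top_coeff (shift_poly Q1P s * shift_poly fusion_quot s) N ((k1 - k2) * (k1 - k3))"
    by (simp add: shift_poly_mult[symmetric] Q1P_mult_fusion_quot top_coeff_shift_poly algebra_simps)
  then have "top_coeff (shift_poly Q1P (- \<eta>) * shift_poly fusion_quot s) N ((k1 - k2) * (k1 - k3))"
    by (rule top_coeff_swap_monic_factor[where D = L]) (intro top_coeff_shift_poly top_coeff_root_poly)+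
  then have "top_coeff (tint_core n) N (k1 ^ (n - 2) * ((k1 - k2) * (k1 - k3)))"
    unfolding tint_core_def s_def by (rule top_coeff_smult)
  with assms show ?thesis by (simp add: Tinf_def mult.assoc)
qed

lemma tint_core_shift:
  assumes "n \<ge> 2"
  shows "Q1 w * poly (tint_core (Suc n)) w = k1 * Q1 (w - \<eta>) * poly (tint_core n) (w + \<eta>)"
proof -
  have "Suc n - 2 = Suc (n - 2)" using assms by simp
  then show ?thesis by (simp add: poly_tint_core algebra_simps)
qed

lemma tint_core_2_at_xi:
  "a \<in> {1..N} \<Longrightarrow> Q1 (\<xi> a) * poly (tint_core 2) (\<xi> a) = k1 * Q1 (\<xi> a - \<eta>) * poly t1_poly (\<xi> a + \<eta>)"
  using Q1_mult_fusion_quot[of "\<xi> a"] by (simp add: poly_tint_core d_at_xi algebra_simps)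

lemma tint_Suc_eq_tint_core:
  assumes n: "n \<ge> 1"
    and t_n: "\<And>a. a \<in> {1..N} \<Longrightarrow> t n (\<xi> a + \<eta>) = (\<Prod>r\<in>{1..n - 1}. d (\<xi> a + \<eta> + of_nat r * \<eta>)) * V a"
    and core: "\<And>a. a \<in> {1..N} \<Longrightarrow> Q1 (\<xi> a) * poly (tint_core (Suc n)) (\<xi> a) = k1 * Q1 (\<xi> a - \<eta>) * V a"
  shows "t (Suc n) w = (\<Prod>r\<in>{1..n}. d (w + of_nat r * \<eta>)) * poly (tint_core (Suc n)) w"
proof (rule tint_Suc_eq_poly[OF inj_xi n])
  show "top_coeff (tint_core (Suc n)) N (Tinf k1 k2 k3 (Suc n))"
    using n by (intro top_coeff_tint_core) simp
next
  fix a assume a: "a \<in> {1..N}"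
  show "(\<Prod>r\<in>{1..n}. d (\<xi> a + of_nat r * \<eta>)) \<noteq> 0" by (rule prod_d_shift_xi_nonzero[OF a])
  define tail where "tail = (\<Prod>r\<in>{1..n - 1}. d (\<xi> a + \<eta> + of_nat r * \<eta>))"
  have "Q1 (\<xi> a) * (t n (\<xi> a + \<eta>) * x a) = tail * V a * (Q1 (\<xi> a) * x a)"
    by (simp add: t_n[OF a] tail_def)
  also have "\<dots> = d (\<xi> a + \<eta>) * tail * (k1 * Q1 (\<xi> a - \<eta>) * V a)"
    by (simp add: Q1_mult_x[OF a])
  also have "\<dots> = d (\<xi> a + \<eta>) * tail * (Q1 (\<xi> a) * poly (tint_core (Suc n)) (\<xi> a))"
    by (simp only: core[OF a])
  also have "\<dots> = Q1 (\<xi> a) * ((\<Prod>r\<in>{1..n}. d (\<xi> a + of_nat r * \<eta>)) * poly (tint_core (Suc n)) (\<xi> a))"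
    unfolding prod_split_first_point[OF n, of d "\<xi> a" \<eta>] tail_def by (simp add: ac_simps)
  finally show "t n (\<xi> a + \<eta>) * x a = (\<Prod>r\<in>{1..n}. d (\<xi> a + of_nat r * \<eta>)) * poly (tint_core (Suc n)) (\<xi> a)"
    using Q1_xi_nonzero[OF a] by simp
qed

lemma tint_eq_tint_core:
  "t (Suc (Suc k)) w = (\<Prod>r\<in>{1..Suc k}. d (w + of_nat r * \<eta>)) * poly (tint_core (Suc (Suc k))) w"
proof (induction k arbitrary: w)
  case 0
  show ?case
    by (rule tint_Suc_eq_tint_core[where V = "\<lambda>a. poly t1_poly (\<xi> a + \<eta>)"])
      (simp_all add: tint_1[unfolded One_nat_def] tint_core_2_at_xi[unfolded numeral_2_eq_2])
next
  case (Suc k)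
  show ?case
    by (rule tint_Suc_eq_tint_core[where V = "\<lambda>a. poly (tint_core (Suc (Suc k))) (\<xi> a + \<eta>)"])
      (simp_all add: Suc.IH tint_core_shift)
qed

lemma tint_2_eq:
  assumes "Q1 z \<noteq> 0" "Q1 (z + \<eta>) \<noteq> 0" "Q2 (z + \<eta>) \<noteq> 0"
  shows "t 2 z = Lam1 \<eta> N \<xi> k1 L lam z * (k1 * t1 (z + \<eta>) + k2 * k3 * d z) / k1"
proof -
  have "t 2 z = d (z + \<eta>) * Q1 (z - \<eta>) * poly fusion_quot z"
    using tint_eq_tint_core[of 0 z] by (simp add: numeral_2_eq_2 poly_tint_core)
  also have "\<dots> = d (z + \<eta>) * Q1 (z - \<eta>) * (k1 * poly t1_poly (z + \<eta>) + k2 * k3 * d z) / Q1 z"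
    using Q1_mult_fusion_quot[of z] assms(1) by (simp add: eq_divide_eq ac_simps)
  also have "\<dots> = Lam1 \<eta> N \<xi> k1 L lam z * (k1 * t1 (z + \<eta>) + k2 * k3 * d z) / k1"
    using k1 assms by (simp add: poly_t1_poly Lam1_def apol_def)
  finally show ?thesis .
qed

lemma tint_Suc_eq_Lam1:
  assumes n: "n \<ge> 2" and Q1: "Q1 z \<noteq> 0"
  shows "t (Suc n) z = Lam1 \<eta> N \<xi> k1 L lam z * t n (z + \<eta>)"
proof -
  obtain k where k: "n = Suc (Suc k)" using n by (metis add_2_eq_Suc le_Suc_ex)
  have "t (Suc n) z = (\<Prod>r\<in>{1..n}. d (z + of_nat r * \<eta>)) * poly (tint_core (Suc n)) z"
    using tint_eq_tint_core[of "Suc k" z] by (simp only: k)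
  also have "\<dots> = d (z + \<eta>) * (\<Prod>r\<in>{1..Suc k}. d (z + \<eta> + of_nat r * \<eta>)) * poly (tint_core (Suc n)) z"
    using prod_split_first_point[of n d z \<eta>] n by (simp add: k)
  also have "\<dots> = d (z + \<eta>) * (k1 * Q1 (z - \<eta>) / Q1 z) * t n (z + \<eta>)"
    using tint_core_shift[OF n, of z] tint_eq_tint_core[of k "z + \<eta>"] Q1
    by (simp add: k eq_divide_eq ac_simps)
  also have "\<dots> = Lam1 \<eta> N \<xi> k1 L lam z * t n (z + \<eta>)"
    by (simp add: Lam1_def apol_def)
  finally show ?thesis .
qed

end

theorem lemmaA1:
  fixes \<eta> k1 k2 k3 :: complex and N L M :: nat and \<xi> lam mu :: "nat \<Rightarrow> complex"
  assumes eta: "\<eta> \<noteq> 0"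
    and N: "N \<ge> 1"
    and xi: "\<And>a b (z::int). a \<in> {1..N} \<Longrightarrow> b \<in> {1..N} \<Longrightarrow> a \<noteq> b \<Longrightarrow> \<xi> a - \<xi> b \<noteq> of_int z * \<eta>"
    and k: "k1 \<noteq> 0" "k2 \<noteq> 0" "k3 \<noteq> 0"
    and bethe1: "\<And>j. j \<in> {1..L} \<Longrightarrow>
       k1 * Qpol M mu (lam j) * apol \<eta> N \<xi> (lam j) = k2 * dpol N \<xi> (lam j) * Qpol M mu (lam j + \<eta>)"
    and bethe2: "\<And>j. j \<in> {1..M} \<Longrightarrow>
       k2 * Qpol M mu (mu j + \<eta>) * Qpol L lam (mu j - \<eta>) = - k3 * Qpol M mu (mu j - \<eta>) * Qpol L lam (mu j)"
    and dlam: "inj_on lam {1..L}"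
    and dmu: "inj_on mu {1..M}"
    and dmulam: "\<And>q m. q \<in> {1..M} \<Longrightarrow> m \<in> {1..L} \<Longrightarrow> mu q \<noteq> lam m"
    and muxi: "\<And>h n. h \<in> {1..M} \<Longrightarrow> n \<in> {1..N} \<Longrightarrow> mu h \<noteq> \<xi> n"
    and x: "\<And>a. x a = t1Bethe \<eta> N \<xi> k1 k2 k3 L lam M mu (\<xi> a)"
  shows "(\<forall>z. Qpol L lam z \<noteq> 0 \<and> Qpol L lam (z + \<eta>) \<noteq> 0 \<and> Qpol M mu (z + \<eta>) \<noteq> 0 \<longrightarrow>
            tint \<eta> N \<xi> k1 k2 k3 x 2 z
              = Lam1 \<eta> N \<xi> k1 L lam z * (k1 * t1Bethe \<eta> N \<xi> k1 k2 k3 L lam M mu (z + \<eta>) + k2 * k3 * dpol N \<xi> z) / k1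
          \<and> tint \<eta> N \<xi> k1 k2 k3 x 2 z
              = Lam1 \<eta> N \<xi> k1 L lam z * (Lam1 \<eta> N \<xi> k1 L lam (z + \<eta>) - Lam2 \<eta> N \<xi> k2 L lam M mu (z + \<eta>)
                  - Lam3 \<eta> N \<xi> k3 M mu (z + \<eta>) + k2 * k3 * dpol N \<xi> z / k1))
       \<and> (\<forall>n\<ge>2. \<forall>z. Qpol L lam z \<noteq> 0 \<longrightarrow>
            tint \<eta> N \<xi> k1 k2 k3 x (Suc n) z = Lam1 \<eta> N \<xi> k1 L lam z * tint \<eta> N \<xi> k1 k2 k3 x n (z + \<eta>))"
proof -
  interpret bethe_solution \<eta> k1 k2 k3 N L M \<xi> lam mu x
    by unfold_locales (fact eta xi k(1) bethe1 bethe2 dlam dmu dmulam muxi x)+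
  have fused: "(k1 * t1 (z + \<eta>) + k2 * k3 * d z) / k1
      = Lam1 \<eta> N \<xi> k1 L lam (z + \<eta>) - Lam2 \<eta> N \<xi> k2 L lam M mu (z + \<eta>)
          - Lam3 \<eta> N \<xi> k3 M mu (z + \<eta>) + k2 * k3 * d z / k1" for z
    using k(1) by (simp add: t1Bethe_def field_simps)
  show ?thesis
    using tint_2_eq tint_Suc_eq_Lam1 by (simp add: fused[symmetric])
qed

end
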